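(* Let $\lambda_{\max}>1$ and let $F:[0,\lambda_{\max}]\to\mathbb{R}_+$ be continuously differentiable with $F(0)=0$, such that $F(x)<F^\star$ for all $x\in[0,1)$ and $F'(1)>0$. Suppose $x_1^\star\in(1,\lambda_{\max}]$, $x_2^\star\in[0,1)$, $p^\star\in(0,1)$ are such that the measure $\alpha(\{x_1^\star\})=p^\star$, $\alpha(\{x_2^\star\})=1-p^\star$ is an optimal solution of the problem defining $F^\star$. Then for all $x\in[0,\lambda_{\max}]$, $$F(x)\le\frac{F(x_1^\star)-F(x_2^\star)}{x_1^\star-x_2^\star}\,x+\frac{x_1^\star F(x_2^\star)-x_2^\star F(x_1^\star)}{x_1^\star-x_2^\star}.$$
   Context: $F^\star=\sup\{\mathbb{E}_\alpha[F(X)]:\alpha$ a probability measure on $[0,\lambda_{\max}]$, $X\sim\alpha$, $\mathbb{E}_\alpha[X]\le1\}$. *)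

theory Defs
  imports "HOL-Probability.Probability"
begin

definition feasible_measure :: "real \<Rightarrow> real measure \<Rightarrow> bool" where
  "feasible_measure lmax M \<longleftrightarrow>
     prob_space M \<and> sets M = sets borel \<and>
     (AE x in M. x \<in> {0..lmax}) \<and> integral\<^sup>L M (\<lambda>x. x) \<le> 1"

definition Fstar :: "real \<Rightarrow> (real \<Rightarrow> real) \<Rightarrow> real" where
  "Fstar lmax F = Sup {integral\<^sup>L M F | M. feasible_measure lmax M}"

end

theory Submission
  imports Defs
begin

text \<open>The optimal two-point measure has its mean at m = p x1 + (1 - p) x2, strictly
  between x2 and x1, and the chord L through (x1, F x1) and (x2, F x2) satisfies
  L m = F*.  Given any x, write m as a convex combination q x + (1 - q) y with
  y = x1 or y = x2 on the other side of m and q > 0.  The two-point measure with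
  these weights is feasible, so q F x + (1 - q) F y <= F* = L m; as L is affine and
  L y = F y, this says q F x <= q L x.\<close>

definition chord :: "(real \<Rightarrow> real) \<Rightarrow> real \<Rightarrow> real \<Rightarrow> real \<Rightarrow> real" where
  "chord F a b x = (F a - F b) / (a - b) * x + (a * F b - b * F a) / (a - b)"

lemma chord_convex_combination:
  "chord F a b (q * x + (1 - q) * y) = q * chord F a b x + (1 - q) * chord F a b y"
proof -
  define s c where "s = (F a - F b) / (a - b)" and "c = (a * F b - b * F a) / (a - b)"
  have "chord F a b = (\<lambda>x. s * x + c)"
    unfolding chord_def s_def c_def ..
  then show ?thesis
    by (simp add: algebra_simps)
qed

lemma chord_left:
  assumes "a \<noteq> b"
  shows "chord F a b a = F a"
  using assms unfolding chord_def
  by (simp add: add_divide_distrib [symmetric] divide_eq_eq algebra_simps)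

lemma chord_right:
  assumes "a \<noteq> b"
  shows "chord F a b b = F b"
  using assms unfolding chord_def
  by (simp add: add_divide_distrib [symmetric] divide_eq_eq algebra_simps)

lemma le_chord_if_mixtures_le:
  fixes F :: "real \<Rightarrow> real"
  assumes m: "b < m" "m < a"
    and mix: "\<And>y q. y \<in> {a, b} \<Longrightarrow> 0 < q \<Longrightarrow> q \<le> 1 \<Longrightarrow> q * x + (1 - q) * y = m \<Longrightarrow>
      q * F x + (1 - q) * F y \<le> chord F a b m"
  shows "F x \<le> chord F a b x"
proof -
  have ab: "a \<noteq> b"
    using m by simp
  obtain y q where y: "y \<in> {a, b}" and q: "0 < q" "q \<le> 1"
    and mean: "q * x + (1 - q) * y = m"
  proof (cases "x < m")
    case True
    define q where "q = (a - m) / (a - x)"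
    have "a - x > 0"
      using True m by simp
    then have "q * (a - x) = a - m"
      unfolding q_def by simp
    then have "q * x + (1 - q) * a = m"
      by (simp add: algebra_simps)
    moreover have "0 < q" "q \<le> 1"
      using True m unfolding q_def by (auto simp: field_simps)
    ultimately show thesis
      using that[of a q] by simp
  next
    case False
    define q where "q = (m - b) / (x - b)"
    have "x - b > 0"
      using False m by simp
    then have "q * (x - b) = m - b"
      unfolding q_def by simp
    then have "q * x + (1 - q) * b = m"
      by (simp add: algebra_simps)
    moreover have "0 < q" "q \<le> 1"
      using False m unfolding q_def by (auto simp: field_simps)
    ultimately show thesis
      using that[of b q] by simp
  qed
  have Fy: "chord F a b y = F y"
    using y ab chord_left chord_right by auto
  have "q * F x + (1 - q) * F y \<le> chord F a b m"
    using mix[OF y q mean] .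
  also have "\<dots> = q * chord F a b x + (1 - q) * F y"
    using mean Fy chord_convex_combination by metis
  finally show ?thesis
    using q by simp
qed

lemma feasible_two_point_measure:
  fixes F :: "real \<Rightarrow> real"
  assumes a: "a \<in> {0..lmax}" and b: "b \<in> {0..lmax}" and q: "0 \<le> q" "q \<le> 1"
    and mean: "q * a + (1 - q) * b \<le> 1" and F: "F \<in> borel_measurable borel"
  shows "\<exists>M. feasible_measure lmax M \<and> integral\<^sup>L M F = q * F a + (1 - q) * F b"
proof -
  define g where "g = (\<lambda>c::bool. if c then a else b)"
  define M where "M = distr (measure_pmf (bernoulli_pmf q)) borel g"
  have g: "g \<in> measurable (measure_pmf (bernoulli_pmf q)) borel"
    by simp
  have integral_M: "integral\<^sup>L M f = q * f a + (1 - q) * f b"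
    if "f \<in> borel_measurable borel" for f :: "real \<Rightarrow> real"
  proof -
    have "integral\<^sup>L M f = (\<integral>c. f (g c) \<partial>measure_pmf (bernoulli_pmf q))"
      unfolding M_def by (rule integral_distr[OF g that])
    also have "\<dots> = (\<Sum>c\<in>UNIV. f (g c) * pmf (bernoulli_pmf q) c)"
      by (rule integral_measure_pmf_real) auto
    also have "\<dots> = q * f a + (1 - q) * f b"
      using q by (simp add: UNIV_bool g_def)
    finally show ?thesis .
  qed
  have "prob_space M"
    unfolding M_def by (rule prob_space.prob_space_distr[OF prob_space_measure_pmf g])
  moreover have "AE x in M. x \<in> {0..lmax}"
    unfolding M_def using a b by (subst AE_distr_iff[OF g]) (auto simp: g_def)
  moreover have "integral\<^sup>L M (\<lambda>x. x) \<le> 1"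
    using integral_M[of "\<lambda>x. x"] mean by simp
  ultimately show ?thesis
    using integral_M[OF F] unfolding feasible_measure_def M_def by auto
qed

text \<open>The Bochner integral of a non-measurable function is 0 by convention.\<close>
lemma Fstar_not_measurable:
  assumes "F \<notin> borel_measurable borel" and "0 \<le> lmax"
  shows "Fstar lmax F = 0"
proof -
  have "integral\<^sup>L M F = 0" if "feasible_measure lmax M" for M
  proof -
    have "sets M = sets borel"
      using that unfolding feasible_measure_def by simp
    then have "\<not> integrable M F"
      using assms(1) by (metis borel_measurable_integrable measurable_cong_sets)
    then show ?thesis
      by (rule not_integrable_integral_eq)
  qed
  moreover have "feasible_measure lmax (return borel 0)"
    unfolding feasible_measure_def
    using assms(2) by (simp add: prob_space_return AE_return integral_return)
  ultimately have "{integral\<^sup>L M F | M. feasible_measure lmax M} = {0}"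
    by (auto intro!: exI[of _ "return borel 0"])
  then show ?thesis
    unfolding Fstar_def by simp
qed

lemma integral_le_Fstar:
  assumes F: "continuous_on {0..lmax} F" and M: "feasible_measure lmax M"
  shows "integral\<^sup>L M F \<le> Fstar lmax F"
proof -
  have "bounded (F ` {0..lmax})"
    by (intro compact_imp_bounded compact_continuous_image F) simp
  then obtain B where B: "0 < B" "\<forall>x\<in>{0..lmax}. \<bar>F x\<bar> \<le> B"
    unfolding bounded_pos by auto
  have "integral\<^sup>L N F \<le> B" if "feasible_measure lmax N" for N
  proof -
    interpret prob_space N
      using that unfolding feasible_measure_def by simp
    have "AE x in N. x \<in> {0..lmax}"
      using that unfolding feasible_measure_def by simp
    then have "AE x in N. F x \<le> B"
      by eventually_elim (use B(2) in force)
    then show ?thesis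
      using B(1) integral_le_const[of F B] not_integrable_integral_eq[of N F]
      by (cases "integrable N F") auto
  qed
  then have "bdd_above {integral\<^sup>L N F | N. feasible_measure lmax N}"
    by (auto intro!: bdd_aboveI)
  then show ?thesis
    unfolding Fstar_def using M by (auto intro!: cSup_upper)
qed

lemma two_point_mixture_le_Fstar:
  assumes "continuous_on {0..lmax} F" "F \<in> borel_measurable borel"
    and "a \<in> {0..lmax}" "b \<in> {0..lmax}" "0 \<le> q" "q \<le> 1" "q * a + (1 - q) * b \<le> 1"
  shows "q * F a + (1 - q) * F b \<le> Fstar lmax F"
  using feasible_two_point_measure[OF assms(3-7,2)] integral_le_Fstar[OF assms(1)] by metis

theorem lemmaB1:
  fixes lmax :: real and F F' :: "real \<Rightarrow> real" and x1 x2 p :: real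
  assumes lmax: "lmax > 1"
    and F_nonneg: "\<forall>x\<in>{0..lmax}. F x \<ge> 0"
    and F_deriv: "\<forall>x\<in>{0..lmax}. (F has_real_derivative F' x) (at x within {0..lmax})"
    and F'_cont: "continuous_on {0..lmax} F'"
    and F0: "F 0 = 0"
    and below: "\<forall>x\<in>{0..<1}. F x < Fstar lmax F"
    and F'1: "F' 1 > 0"
    and x1: "x1 \<in> {1<..lmax}" and x2: "x2 \<in> {0..<1}" and p: "p \<in> {0<..<1}"
    and feas: "p * x1 + (1 - p) * x2 \<le> 1"
    and opt: "p * F x1 + (1 - p) * F x2 = Fstar lmax F"
  shows "\<forall>x\<in>{0..lmax}.
    F x \<le> (F x1 - F x2) / (x1 - x2) * x + (x1 * F x2 - x2 * F x1) / (x1 - x2)"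
proof
  fix x assume x: "x \<in> {0..lmax}"
  define m where "m = p * x1 + (1 - p) * x2"
  have cont: "continuous_on {0..lmax} F"
    using F_deriv unfolding continuous_on_eq_continuous_within
    by (metis has_derivative_continuous has_field_derivative_def)
  have meas: "F \<in> borel_measurable borel"
    using Fstar_not_measurable[of F lmax] below F0 lmax by force
  have chord_m: "chord F x1 x2 m = Fstar lmax F"
    unfolding m_def chord_convex_combination using x1 x2 opt chord_left chord_right by simp
  have "0 < p * (x1 - x2)" "0 < (1 - p) * (x1 - x2)"
    using p x1 x2 by auto
  then have m: "x2 < m" "m < x1"
    unfolding m_def by (simp_all add: algebra_simps)
  have mixture_le: "q * F x + (1 - q) * F y \<le> Fstar lmax F"
    if "y \<in> {x1, x2}" "0 < q" "q \<le> 1" "q * x + (1 - q) * y = m" for y q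
    using that x1 x2 feas unfolding m_def
    by (intro two_point_mixture_le_Fstar[OF cont meas x]) auto
  have "F x \<le> chord F x1 x2 x"
    using m by (rule le_chord_if_mixtures_le) (use mixture_le chord_m in simp)
  then show "F x \<le> (F x1 - F x2) / (x1 - x2) * x + (x1 * F x2 - x2 * F x1) / (x1 - x2)"
    unfolding chord_def .
qed

end
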